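(* Let $m\ge4$ be even, $h=\frac m2$, and $\bar A=\{1,2,\dots,2^{h-1}-1\}$. For any $i\in\bar A$ and $j\in\Gamma_{(h)}$, $C_{i+2^h}\cap C_{j+2^h}\neq\emptyset$ only if $i=j$ and $j\in\Gamma_{(h-1)}$.
   Context: Let $v=2^m-1$. For an integer $i$, $C_i=\{i\cdot 2^s \bmod v: s\ge 0\}$ is the $2$-cyclotomic coset of $i$ modulo $v$. For a positive integer $t$, $\Gamma_{(t)}=\{j:1\le j\le 2^t-1,\ j\text{ odd}\}$. *)

theory Defs
  imports Main
begin

definition cyc_coset :: "nat \<Rightarrow> nat \<Rightarrow> nat set" where
  "cyc_coset v i = {(i * 2 ^ s) mod v | s. True}"

definition Gamma :: "nat \<Rightarrow> nat set" where
  "Gamma t = {j. 1 \<le> j \<and> j \<le> 2 ^ t - 1 \<and> odd j}"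

end

theory Submission
  imports Defs "HOL-Number_Theory.Cong"
begin

text \<open>Multiplication by 2 modulo \<open>2^m - 1\<close> rotates \<open>m\<close>-bit words, so the two cosets meet
only if some rotation by \<open>r < m = 2h\<close> carries \<open>i + 2^h\<close> to \<open>j + 2^h\<close>. For \<open>r < h\<close> the product
\<open>(i + 2^h) 2^r\<close> stays below the modulus, so it equals the odd number \<open>j + 2^h\<close> and \<open>r = 0\<close>.
For \<open>r = h + k\<close> the rotation swaps the two \<open>h\<close>-bit halves of \<open>(i + 2^h) 2^k\<close>; comparing halves
with \<open>j + 2^h\<close> makes the low half equal to 1, hence \<open>k = 0\<close> and \<open>i + 2^h = 2^h j + 1\<close>,
i.e. \<open>i = j = 1\<close>.\<close>

lemma pow2_cong_pow2_mod: "[2 ^ n = 2 ^ (n mod m)] (mod 2 ^ m - 1 :: nat)"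
proof -
  have "[2 ^ m = 1] (mod 2 ^ m - 1 :: nat)"
    by (simp add: cong_altdef_nat)
  then have "[(2 ^ m) ^ (n div m) * 2 ^ (n mod m) = 1 ^ (n div m) * 2 ^ (n mod m)] (mod 2 ^ m - 1 :: nat)"
    by (intro cong_scalar_right cong_pow)
  moreover have "((2::nat) ^ m) ^ (n div m) * 2 ^ (n mod m) = 2 ^ n"
    by (simp flip: power_mult power_add)
  ultimately show ?thesis
    by simp
qed

lemma cyc_coset_meet_imp_rotation:
  fixes a b m :: nat
  assumes "m > 0" and "cyc_coset (2 ^ m - 1) a \<inter> cyc_coset (2 ^ m - 1) b \<noteq> {}"
  obtains r where "r < m" and "[b = a * 2 ^ r] (mod 2 ^ m - 1)"
proof -
  obtain s t where st: "[a * 2 ^ s = b * 2 ^ t] (mod 2 ^ m - 1)"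
    using assms(2) unfolding cyc_coset_def cong_def by auto
  have "t \<le> m * t"
    using assms(1) by simp
  have "[b = b * 2 ^ (m * t)] (mod 2 ^ m - 1)"
    using cong_scalar_left[OF pow2_cong_pow2_mod[of "m * t" m]] by (simp add: cong_sym)
  also have "b * 2 ^ (m * t) = b * 2 ^ t * 2 ^ (m * t - t)"
    using \<open>t \<le> m * t\<close> by (simp flip: power_add)
  also have "[\<dots> = a * 2 ^ s * 2 ^ (m * t - t)] (mod 2 ^ m - 1)"
    using st by (intro cong_scalar_right) (simp add: cong_sym)
  also have "a * 2 ^ s * 2 ^ (m * t - t) = a * 2 ^ (s + (m * t - t))"
    by (simp add: power_add)
  also have "[\<dots> = a * 2 ^ ((s + (m * t - t)) mod m)] (mod 2 ^ m - 1)"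
    by (intro cong_scalar_left pow2_cong_pow2_mod)
  finally show ?thesis
    using that assms(1) mod_less_divisor by blast
qed

lemma rotate_cong_pow2:
  fixes x y :: nat
  assumes "k \<le> m"
  shows "[(x * 2 ^ k + y) * 2 ^ (m - k) = x + y * 2 ^ (m - k)] (mod 2 ^ m - 1)"
proof -
  have "(x * 2 ^ k + y) * 2 ^ (m - k) = x * 2 ^ m + y * 2 ^ (m - k)"
    using assms by (simp add: algebra_simps flip: power_add)
  moreover have "[x * 2 ^ m = x] (mod 2 ^ m - 1)"
    using cong_scalar_left[OF pow2_cong_pow2_mod[of m m]] by simp
  ultimately show ?thesis
    by (simp add: cong_add)
qed

lemma cong_eq_if_less_modulus:
  fixes b c v :: nat
  assumes "[b = c] (mod v)" and "0 < b" and "b < v" and "c \<le> v"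
  shows "b = c"
proof (cases "c = v")
  case True
  then show ?thesis
    using assms(1-3) by (simp add: cong_def)
next
  case False
  then show ?thesis
    using assms by (simp add: cong_less_modulus_unique_nat)
qed

lemma shifted_mult_pow2_less:
  fixes i h k :: nat
  assumes "1 \<le> h" and "i < 2 ^ (h - 1)" and "k < h"
  shows "(i + 2 ^ h) * 2 ^ k < 2 ^ (2 * h) - 1"
proof -
  define p :: nat where "p = 2 ^ (h - 1)"
  have p_pos: "1 \<le> p"
    by (simp add: p_def)
  have pow_h: "(2::nat) ^ h = 2 * p"
    using assms(1) by (simp add: p_def flip: power_Suc)
  have pow_2h: "(2::nat) ^ (2 * h) = 4 * p * p"
  proof -
    have "(2::nat) ^ (2 * h) = 2 ^ h * 2 ^ h"
      by (simp add: mult_2 power_add)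
    then show ?thesis
      by (simp add: pow_h)
  qed
  have "i + 2 ^ h + 1 \<le> 3 * p"
    using assms(2) by (simp add: pow_h p_def)
  then have "(i + 2 ^ h) * 2 ^ k + 2 ^ k \<le> 3 * p * 2 ^ k"
    by (metis add_mult_distrib mult_1 mult_le_mono1)
  also have "\<dots> \<le> 3 * p * p"
    using assms(3) unfolding p_def by (intro mult_le_mono2 power_increasing) auto
  finally have "(i + 2 ^ h) * 2 ^ k + 2 ^ k \<le> 3 * p * p" .
  moreover have "(1::nat) \<le> 2 ^ k" and "1 \<le> p * p"
    using p_pos by simp_all
  ultimately show ?thesis
    unfolding pow_2h by linarith
qed

lemma shifted_less_mersenne:
  fixes j h :: nat
  assumes "2 \<le> h" and "j < 2 ^ h"
  shows "j + 2 ^ h < 2 ^ (2 * h) - 1"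
proof -
  have "j + 2 ^ h < 2 ^ Suc h"
    using assms(2) by simp
  moreover have "(2::nat) ^ Suc h < 2 ^ (2 * h)"
    using assms(1) by (intro power_strict_increasing) auto
  ultimately show ?thesis
    by linarith
qed

lemma rotation_small_shift:
  fixes i j h r :: nat
  assumes "2 \<le> h" and "i < 2 ^ (h - 1)" and "odd j" and "j < 2 ^ h" and "r < h"
    and "[j + 2 ^ h = (i + 2 ^ h) * 2 ^ r] (mod 2 ^ (2 * h) - 1)"
  shows "i = j"
proof -
  have eq: "j + 2 ^ h = (i + 2 ^ h) * 2 ^ r"
    using assms(6) shifted_less_mersenne[OF assms(1,4)] shifted_mult_pow2_less[OF _ assms(2,5)] assms(1)
    by (simp add: cong_less_modulus_unique_nat)
  have "r = 0"
  proof (rule ccontr)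
    assume "r \<noteq> 0"
    then have "even ((i + 2 ^ h) * 2 ^ r)"
      by simp
    moreover have "odd (j + 2 ^ h)"
      using assms(1,3) by simp
    ultimately show False
      using eq by simp
  qed
  then show ?thesis
    using eq by simp
qed

lemma base_digits_unique:
  fixes x y u v n :: nat
  assumes "x + y * n = u + v * n" and "x < n" and "u < n"
  shows "x = u" and "y = v"
proof -
  have "(x + y * n) mod n = (u + v * n) mod n" and "(x + y * n) div n = (u + v * n) div n"
    using assms(1) by simp_all
  then show "x = u" and "y = v"
    using assms(2,3) by simp_all
qed

lemma rotation_large_shift:
  fixes i j h k :: nat
  assumes "2 \<le> h" and "i < 2 ^ (h - 1)" and "odd j" and "j < 2 ^ h" and "k < h"
    and "[j + 2 ^ h = (i + 2 ^ h) * 2 ^ (h + k)] (mod 2 ^ (2 * h) - 1)"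
  shows "i = j"
proof -
  define a where "a = (i + 2 ^ h) * 2 ^ k"
  define x where "x = a div 2 ^ h"
  define y where "y = a mod 2 ^ h"
  have pow_2h: "(2::nat) ^ (2 * h) = 2 ^ h * 2 ^ h"
    by (simp add: mult_2 power_add)
  have a_split: "a = x * 2 ^ h + y"
    unfolding x_def y_def by (rule div_mult_mod_eq[symmetric])
  have "x < 2 ^ h"
    using shifted_mult_pow2_less[OF _ assms(2,5)] assms(1)
    by (simp add: x_def a_def pow_2h div_less_iff_less_mult)
  moreover have "y < 2 ^ h"
    by (simp add: y_def)
  ultimately have "x + y * 2 ^ h \<le> 2 ^ (2 * h) - 1"
  proof -
    have "(y + 1) * 2 ^ h \<le> 2 ^ h * 2 ^ h"
      using \<open>y < 2 ^ h\<close> by (intro mult_le_mono1) simp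
    then show ?thesis
      using \<open>x < 2 ^ h\<close> unfolding pow_2h by (simp add: algebra_simps)
  qed
  moreover have "[j + 2 ^ h = x + y * 2 ^ h] (mod 2 ^ (2 * h) - 1)"
  proof -
    have "(i + 2 ^ h) * 2 ^ (h + k) = (x * 2 ^ h + y) * 2 ^ (2 * h - h)"
      by (simp add: a_split[symmetric] a_def power_add mult_ac)
    then show ?thesis
      using assms(6) rotate_cong_pow2[of h "2 * h" x y] by (simp add: cong_trans)
  qed
  ultimately have "j + 2 ^ h = x + y * 2 ^ h"
    using shifted_less_mersenne[OF assms(1,4)] by (intro cong_eq_if_less_modulus) auto
  then have "x = j" and "y = 1"
    using base_digits_unique[of x y "2 ^ h" j 1] \<open>x < 2 ^ h\<close> assms(4) by simp_all
  then have "odd a"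
    using a_split assms(1) by simp
  then have "k = 0"
    unfolding a_def by (cases k) auto
  then have "i + 1 * 2 ^ h = 1 + j * 2 ^ h"
    using a_split \<open>y = 1\<close> \<open>x = j\<close> by (simp add: a_def)
  moreover have "i < 2 ^ h"
    using assms(2) power_increasing[of "h - 1" h "2::nat"] by linarith
  moreover have "(1::nat) < 2 ^ h"
    using assms(1) by (intro one_less_power) auto
  ultimately have "i = 1" and "1 = j"
    by (rule base_digits_unique)+
  then show ?thesis
    by simp
qed

theorem lemma12:
  fixes m h i j :: nat
  assumes "m \<ge> 4" and "even m" and "h = m div 2"
    and "i \<in> {1 .. 2 ^ (h - 1) - 1}"
    and "j \<in> Gamma h"
    and "cyc_coset (2 ^ m - 1) (i + 2 ^ h) \<inter> cyc_coset (2 ^ m - 1) (j + 2 ^ h) \<noteq> {}"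
  shows "i = j \<and> j \<in> Gamma (h - 1)"
proof -
  have h: "2 \<le> h" and m: "m = 2 * h"
    using assms(1-3) by auto
  have i: "i < 2 ^ (h - 1)"
    using assms(4) by auto
  have j: "odd j" "j < 2 ^ h"
    using assms(5) by (auto simp: Gamma_def)
  obtain r where "r < 2 * h" and rot: "[j + 2 ^ h = (i + 2 ^ h) * 2 ^ r] (mod 2 ^ (2 * h) - 1)"
    using cyc_coset_meet_imp_rotation[OF _ assms(6)] h m by auto
  have "i = j"
  proof (cases "r < h")
    case True
    then show ?thesis
      using rotation_small_shift[OF h i j _ rot] by simp
  next
    case False
    then have "r = h + (r - h)" and "r - h < h"
      using \<open>r < 2 * h\<close> by auto
    then show ?thesis
      using rotation_large_shift[OF h i j, of "r - h"] rot by simp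
  qed
  then show ?thesis
    using assms(4) j(1) by (auto simp: Gamma_def)
qed

end
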